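(* Fix $\alpha\in(0,\pi/4]$, $s>1$ and $\rho>0$, and suppose the execution of MaxHedge with these parameters is valid. If MaxHedge fails, then every deterministic online algorithm has competitive ratio greater than $\rho$.
   Context: A drone at $(t_x,t_y)$, $t_y\ge0$, covers $[t_x-t_y\tan\alpha,t_x+t_y\tan\alpha]$ on the $x$-axis; $\mathrm{FC}(X_0,\dots,X_i)$ denotes the set of positions covering $X_0,\dots,X_i$. For an input $X_0=(0,0),X_1,\dots,X_n$ on the $x$-axis, an online algorithm responds with $P_0=X_0$ and $P_i\in\mathrm{FC}(X_0,\dots,X_i)$ chosen knowing only $X_0,\dots,X_i$; its cost is $\sum_i|P_iP_{i+1}|$; OPT is the minimum cost with the input known in advance; the competitive ratio is the supremum over inputs of cost/OPT. Fix $s>1$ and the requests $X_0=(0,0)$, $X_i=(2(-s)^{i-1},0)$, $i\ge1$. Let $T_i$ be the apex of $\mathrm{FC}(X_0,\dots,X_i)$: $T_0=X_0$, $T_1=(1,\cot\alpha)$, $T_i=((-s)^{i-2}(1-s),s^{i-2}(1+s)\cot\alpha)$ for $i\ge2$, and $o_i=|X_0T_i|$ (the optimal offline cost for $X_0,\dots,X_i$; $o_0=0$). MaxHedge with parameter $\rho$: $Z_0=X_0$; for $i\ge1$, $Z_i=T_i+z_i(T_{i+1}-T_i)$, $z_i\ge0$, is the intersection of the halfline from $T_i$ through $T_{i+1}$ with the circle centred at $Z_{i-1}$ of radius $\rho(o_i-o_{i-1})$; if no such point exists MaxHedge fails in round $i$. The domain is the set of rounds before failure (all rounds if it never fails). The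 execution is valid if for every round $i\ge1$ in the domain, $Z_i$ lies on the same side of the $y$-axis as $T_i$. *)

theory Defs
  imports Complex_Main "HOL-Library.Extended_Real"
begin

text \<open>Points of the plane are pairs (x, y); requests lie on the x-axis and are
  represented by their x-coordinate.\<close>

definition edist :: "real \<times> real \<Rightarrow> real \<times> real \<Rightarrow> real" where
  "edist p q = sqrt ((fst p - fst q)^2 + (snd p - snd q)^2)"

definition covers :: "real \<Rightarrow> real \<times> real \<Rightarrow> real \<Rightarrow> bool" where
  "covers \<alpha> t x \<longleftrightarrow> snd t \<ge> 0 \<and> fst t - snd t * tan \<alpha> \<le> x \<and> x \<le> fst t + snd t * tan \<alpha>"

definition FC :: "real \<Rightarrow> real list \<Rightarrow> (real \<times> real) set" where
  "FC \<alpha> rs = {t. snd t \<ge> 0 \<and> (\<forall>x \<in> set rs. covers \<alpha> t x)}"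

text \<open>An input is X_0 = (0,0) followed by X_1..X_n, given as the list xs of the
  x-coordinates of X_1..X_n; the full request list is 0 # xs.
  A deterministic online algorithm is a map from the prefix X_0..X_i seen so far
  to the response P_i.\<close>
definition online_alg :: "real \<Rightarrow> (real list \<Rightarrow> real \<times> real) \<Rightarrow> bool" where
  "online_alg \<alpha> A \<longleftrightarrow> A [0] = (0, 0) \<and> (\<forall>xs. A (0 # xs) \<in> FC \<alpha> (0 # xs))"

definition alg_cost :: "(real list \<Rightarrow> real \<times> real) \<Rightarrow> real list \<Rightarrow> real" where
  "alg_cost A xs = (\<Sum>i<length xs. edist (A (take (Suc i) (0 # xs))) (A (take (Suc (Suc i)) (0 # xs))))"

definition OPT :: "real \<Rightarrow> real list \<Rightarrow> real" where
  "OPT \<alpha> xs = Inf {(\<Sum>i<length xs. edist (P i) (P (Suc i))) | P.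
      P 0 = (0, 0) \<and> (\<forall>i \<le> length xs. P i \<in> FC \<alpha> (take (Suc i) (0 # xs)))}"

definition comp_ratio :: "real \<Rightarrow> (real list \<Rightarrow> real \<times> real) \<Rightarrow> ereal" where
  "comp_ratio \<alpha> A = (SUP xs \<in> {xs. OPT \<alpha> xs > 0}. ereal (alg_cost A xs / OPT \<alpha> xs))"

text \<open>The apexes T_i for the requests X_0 = (0,0), X_i = (2(-s)^(i-1), 0).\<close>
definition T :: "real \<Rightarrow> real \<Rightarrow> nat \<Rightarrow> real \<times> real" where
  "T \<alpha> s i = (if i = 0 then (0, 0) else if i = 1 then (1, cot \<alpha>)
       else ((-s)^(i-2) * (1 - s), s^(i-2) * (1 + s) * cot \<alpha>))"

definition o_cost :: "real \<Rightarrow> real \<Rightarrow> nat \<Rightarrow> real" where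
  "o_cost \<alpha> s i = edist (0, 0) (T \<alpha> s i)"

definition hl_pt :: "real \<Rightarrow> real \<Rightarrow> nat \<Rightarrow> real \<Rightarrow> real \<times> real" where
  "hl_pt \<alpha> s i z = (fst (T \<alpha> s i) + z * (fst (T \<alpha> s (Suc i)) - fst (T \<alpha> s i)),
                     snd (T \<alpha> s i) + z * (snd (T \<alpha> s (Suc i)) - snd (T \<alpha> s i)))"

definition mh_ok :: "real \<Rightarrow> real \<Rightarrow> real \<Rightarrow> nat \<Rightarrow> real \<times> real \<Rightarrow> real \<Rightarrow> bool" where
  "mh_ok \<alpha> s \<rho> i Zprev z \<longleftrightarrow> z \<ge> 0 \<and>
     edist (hl_pt \<alpha> s i z) Zprev = \<rho> * (o_cost \<alpha> s i - o_cost \<alpha> s (i - 1))"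

text \<open>MaxHedge points Z_i (meaningful for rounds in the domain; the intersection
  point is unique there under the standing assumptions).\<close>
fun Z :: "real \<Rightarrow> real \<Rightarrow> real \<Rightarrow> nat \<Rightarrow> real \<times> real" where
  "Z \<alpha> s \<rho> 0 = (0, 0)"
| "Z \<alpha> s \<rho> (Suc i) = hl_pt \<alpha> s (Suc i) (SOME z. mh_ok \<alpha> s \<rho> (Suc i) (Z \<alpha> s \<rho> i) z)"

definition fails_in :: "real \<Rightarrow> real \<Rightarrow> real \<Rightarrow> nat \<Rightarrow> bool" where
  "fails_in \<alpha> s \<rho> i \<longleftrightarrow> i \<ge> 1 \<and> \<not> (\<exists>z. mh_ok \<alpha> s \<rho> i (Z \<alpha> s \<rho> (i - 1)) z)"

definition in_domain :: "real \<Rightarrow> real \<Rightarrow> real \<Rightarrow> nat \<Rightarrow> bool" where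
  "in_domain \<alpha> s \<rho> i \<longleftrightarrow> (\<forall>j \<le> i. \<not> fails_in \<alpha> s \<rho> j)"

definition mh_fails :: "real \<Rightarrow> real \<Rightarrow> real \<Rightarrow> bool" where
  "mh_fails \<alpha> s \<rho> \<longleftrightarrow> (\<exists>i. fails_in \<alpha> s \<rho> i)"

definition mh_valid :: "real \<Rightarrow> real \<Rightarrow> real \<Rightarrow> bool" where
  "mh_valid \<alpha> s \<rho> \<longleftrightarrow> (\<forall>i \<ge> 1. in_domain \<alpha> s \<rho> i \<longrightarrow>
      sgn (fst (Z \<alpha> s \<rho> i)) = sgn (fst (T \<alpha> s i)))"

end

theory Submission
  imports Defs
begin

text \<open>Suppose an online algorithm had competitive ratio at most \<rho>. On every prefix of the
  alternating input its slack, \<rho> times the offline optimum o_i minus its cost so far, is then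
  nonnegative. Along the rounds in which MaxHedge succeeds, the algorithm's position lags behind
  MaxHedge's point Z_i, measured along the direction of MaxHedge's next move, by at least this
  slack: the budget \<rho> (o_i - o_(i-1)) that both spend per round preserves the bound, and at the
  change of direction the algorithm is confined to the cone above the apex T_i, where validity of
  the run (Z_i on the side of T_i) keeps the bound intact. In the failing round k the budget is
  smaller than the distance from Z_(k-1) to T_k, while the algorithm lies in the cone above T_k;
  the lag bound then makes its slack negative.\<close>

lemma inner_le_sqrt_sum_squares:
  fixes a1 a2 b1 b2 :: real
  shows "a1 * b1 + a2 * b2 \<le> sqrt (a1\<^sup>2 + a2\<^sup>2) * sqrt (b1\<^sup>2 + b2\<^sup>2)"
  by (rule power2_le_imp_le)
     (simp_all add: power2_sum power_mult_distrib ring_distribs L2_set_mult_ineq_lemma add.commute)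

lemma neg_one_power_cases: "(-1::real)^n = 1 \<or> (-1::real)^n = -1"
  by (cases "even n") simp_all

lemma sqrt_quadratic_ratio_le:
  fixes A B C D M N :: real
  assumes M: "0 \<le> M" "M < N" and A: "0 < A" and B: "0 \<le> B" and C: "0 < C" and D: "0 \<le> D"
    and BD: "B * D \<le> A * C"
  shows "sqrt (C\<^sup>2*N + 2*C*D*M + D\<^sup>2*N) * (A*M + B*N)
    \<le> sqrt (A\<^sup>2*N + 2*A*B*M + B\<^sup>2*N) * (C*N + D*M)"
proof -
  define g1 where "g1 = sqrt (A\<^sup>2*N + 2*A*B*M + B\<^sup>2*N)"
  define g2 where "g2 = sqrt (C\<^sup>2*N + 2*C*D*M + D\<^sup>2*N)"
  define P where "P = C*N + D*M"
  define Q where "Q = A*M + B*N"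
  define K where "K = N\<^sup>2 - M\<^sup>2"
  have N: "0 < N" using M by linarith
  have K: "0 \<le> K" unfolding K_def using M by (simp add: power_mono)
  have g1: "0 \<le> g1" and g2: "0 \<le> g2" unfolding g1_def g2_def
    using A B C D M N by simp_all
  have g1_sq: "g1\<^sup>2 * N = Q\<^sup>2 + A\<^sup>2*K" and g2_sq: "g2\<^sup>2 * N = P\<^sup>2 + D\<^sup>2*K"
    unfolding g1_def g2_def P_def Q_def K_def using A B C D M N
    by (simp_all add: algebra_simps power2_eq_square)
  have "N * ((g1*P)\<^sup>2 - (g2*Q)\<^sup>2) = (g1\<^sup>2 * N) * P\<^sup>2 - (g2\<^sup>2 * N) * Q\<^sup>2"
    by (simp add: algebra_simps)
  also have "\<dots> = K * (A*P - D*Q) * (A*P + D*Q)"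
    unfolding g1_sq g2_sq by (simp add: algebra_simps power2_eq_square)
  also have "A*P - D*Q = N * (A*C - B*D)" unfolding P_def Q_def by (simp add: algebra_simps)
  also have "K * (N * (A*C - B*D)) * (A*P + D*Q) \<ge> 0"
    using K N BD A C D M B unfolding P_def Q_def by simp
  finally have "(g2*Q)\<^sup>2 \<le> (g1*P)\<^sup>2" using N by (simp add: zero_le_mult_iff)
  moreover have "0 \<le> P" unfolding P_def using C D M N by simp
  ultimately show ?thesis
    unfolding g1_def[symmetric] g2_def[symmetric] P_def[symmetric] Q_def[symmetric]
    using g1 by (meson power2_le_imp_le mult_nonneg_nonneg)
qed

lemma lag_bound_turn_cone_coords:
  fixes A B C D M N p m s0 :: real
  assumes M: "0 \<le> M" "M < N" and A: "0 < A" and B: "0 \<le> B" and C: "0 < C" and D: "0 \<le> D"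
    and BD: "B * D \<le> A * C" and Q: "0 < A*M + B*N" and p: "0 \<le> p" and s0: "0 \<le> s0"
    and lag: "sqrt (A\<^sup>2*N + 2*A*B*M + B\<^sup>2*N) * s0 \<le> -p*(A*N + B*M) + m*(A*M + B*N)"
  shows "sqrt (C\<^sup>2*N + 2*C*D*M + D\<^sup>2*N) * s0 \<le> -p*(C*M + D*N) + m*(C*N + D*M)"
proof -
  define g1 where "g1 = sqrt (A\<^sup>2*N + 2*A*B*M + B\<^sup>2*N)"
  define g2 where "g2 = sqrt (C\<^sup>2*N + 2*C*D*M + D\<^sup>2*N)"
  define X where "X = -p*(A*N + B*M) + m*(A*M + B*N)"
  define Y where "Y = -p*(C*M + D*N) + m*(C*N + D*M)"
  have N: "0 < N" using M by linarith
  have K: "0 \<le> N\<^sup>2 - M\<^sup>2" using M by (simp add: power_mono)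
  have g1: "0 < g1" unfolding g1_def using A B M N
    by (intro real_sqrt_gt_zero add_pos_nonneg) simp_all
  have g2: "0 \<le> g2" unfolding g2_def using C D M N by simp
  have ratio: "g2 * (A*M + B*N) \<le> g1 * (C*N + D*M)"
    unfolding g1_def g2_def by (rule sqrt_quadratic_ratio_le[OF M A B C D BD])
  have X: "0 \<le> X" using lag s0 g1 unfolding X_def g1_def[symmetric]
    by (meson mult_nonneg_nonneg order_trans less_imp_le)
  have "(A*M + B*N) * (g1*Y - g2*X)
      = X * (g1 * (C*N + D*M) - g2 * (A*M + B*N)) + p * g1 * (A*C - B*D) * (N\<^sup>2 - M\<^sup>2)"
    unfolding X_def Y_def by (simp add: algebra_simps power2_eq_square)
  also have "\<dots> \<ge> 0" using X ratio p g1 BD K by simp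
  finally have "g2 * X \<le> g1 * Y" using Q by (simp add: zero_le_mult_iff)
  moreover have "g1 * (g2 * s0) \<le> g2 * X" using lag g2 unfolding X_def g1_def[symmetric]
    by (metis mult.left_commute mult_left_mono)
  ultimately have "g1 * (g2 * s0) \<le> g1 * Y" by linarith
  then show ?thesis using g1 unfolding g2_def Y_def by simp
qed

text \<open>Read (\<sigma> t (B - A), A + B) as the old and (\<sigma> t (C - D), C + D) as the new direction of
  MaxHedge, and (\<sigma> t B - dx, B - dy) as the offset from a point (dx, dy) of the cone
  \<bar>dx\<bar> \<le> t dy to the hedge point. A lag bound for the old direction then persists for the new one.\<close>

lemma lag_bound_turn:
  fixes \<sigma> t A B C D dx dy s0 :: real
  assumes \<sigma>: "\<sigma> = 1 \<or> \<sigma> = -1" and t: "0 < t" "t \<le> 1"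
    and A: "0 < A" and B: "0 \<le> B" and C: "0 < C" and D: "0 \<le> D" and BD: "B * D \<le> A * C"
    and nondeg: "0 < A*(1 - t\<^sup>2) + B*(1 + t\<^sup>2)" and cone: "\<bar>dx\<bar> \<le> t * dy" and s0: "0 \<le> s0"
    and lag: "sqrt ((\<sigma>*t*(B - A))\<^sup>2 + (A + B)\<^sup>2) * s0
      \<le> \<sigma>*t*(B - A) * (\<sigma>*t*B - dx) + (A + B) * (B - dy)"
  shows "sqrt ((\<sigma>*t*(C - D))\<^sup>2 + (C + D)\<^sup>2) * s0
      \<le> \<sigma>*t*(C - D) * (\<sigma>*t*B - dx) + (C + D) * (B - dy)"
proof -
  \<comment> \<open>Split (dx, dy) = p (-\<sigma> t, 1) + q (\<sigma> t, 1) along the two edges of the cone.\<close>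
  define p where "p = (dy - \<sigma>*dx/t) / 2"
  define q where "q = (dy + \<sigma>*dx/t) / 2"
  have \<sigma>\<sigma>: "\<sigma> * \<sigma> = 1" using \<sigma> by auto
  have dx: "dx = \<sigma>*t*(q - p)" unfolding p_def q_def using t \<sigma>\<sigma> by (simp add: field_simps)
  have dy: "dy = p + q" unfolding p_def q_def by (simp add: field_simps)
  have p: "0 \<le> p"
  proof -
    have "\<sigma> * dx \<le> \<bar>dx\<bar>" using \<sigma> by auto
    then have "\<sigma> * dx / t \<le> dy" using cone t by (simp add: divide_le_eq mult.commute)
    then show ?thesis unfolding p_def by simp
  qed
  define N where "N = 1 + t\<^sup>2"
  define M where "M = 1 - t\<^sup>2"
  have M: "0 \<le> M" "M < N" unfolding M_def N_def using t by (simp_all add: power_le_one)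
  have "(\<sigma>*t*(B - A))\<^sup>2 + (A + B)\<^sup>2 = A\<^sup>2*N + 2*A*B*M + B\<^sup>2*N"
    and "(\<sigma>*t*(C - D))\<^sup>2 + (C + D)\<^sup>2 = C\<^sup>2*N + 2*C*D*M + D\<^sup>2*N"
    and "\<sigma>*t*(B - A) * (\<sigma>*t*B - dx) + (A + B) * (B - dy) = -p*(A*N + B*M) + (B - q)*(A*M + B*N)"
    and "\<sigma>*t*(C - D) * (\<sigma>*t*B - dx) + (C + D) * (B - dy) = -p*(C*M + D*N) + (B - q)*(C*N + D*M)"
    using \<sigma> unfolding dx dy N_def M_def by (auto simp: algebra_simps power2_eq_square)
  with lag_bound_turn_cone_coords[OF M A B C D BD _ p s0] nondeg lag show ?thesis
    unfolding N_def M_def by simp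
qed

text \<open>The lag bound for the direction (-A, A) caps the length of a move into the cone
  \<bar>D1\<bar> \<le> D2, while the slack update asks for at least that length, so every estimate is tight.\<close>

lemma tight_move:
  fixes A U1 U2 D1 D2 s0 s1 :: real
  assumes A: "0 < A" and D: "\<bar>D1\<bar> \<le> D2" and s0: "0 \<le> s0" and s1: "0 \<le> s1"
    and lag: "sqrt (A\<^sup>2 + A\<^sup>2) * s0 \<le> -A*U1 + A*U2"
    and step: "s1 = s0 + sqrt (A\<^sup>2 + A\<^sup>2) - sqrt ((D1 - A + U1)\<^sup>2 + (D2 + A + U2)\<^sup>2)"
  shows "D1 = D2 \<and> D1 + D2 + U1 + U2 = 0 \<and> sqrt 2 * s0 = U2 - U1 \<and> s1 = 0"
proof -
  define r where "r = sqrt 2"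
  have r: "0 < r" "r\<^sup>2 = 2" unfolding r_def by simp_all
  have sA: "sqrt (A\<^sup>2 + A\<^sup>2) = A * r" unfolding r_def using A
    by (simp add: real_sqrt_mult power2_eq_square)
  define n where "n = sqrt ((D1 - A + U1)\<^sup>2 + (D2 + A + U2)\<^sup>2)"
  define x where "x = D2 - D1"
  define y where "y = U2 - U1 + 2*A"
  define z where "z = D1 + D2 + U1 + U2"
  have x: "0 \<le> x" using D unfolding x_def by linarith
  have "A * (r * s0) \<le> A * (U2 - U1)" using lag unfolding sA by (simp add: algebra_simps)
  then have s0_le: "r * s0 \<le> U2 - U1" using A by (simp add: mult_le_cancel_left_pos)
  have "0 \<le> r * s0" using r s0 by simp
  then have y: "0 \<le> y" using s0_le A unfolding y_def by linarith
  have n_eq: "n = s0 + A * r - s1" using step unfolding sA n_def[symmetric] by simp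
  have "r * n = r * s0 + A * r\<^sup>2 - r * s1"
    unfolding n_eq by (simp add: algebra_simps power2_eq_square)
  then have rn: "r * n = r * s0 + 2*A - r * s1" using r by simp
  have "(r * n)\<^sup>2 = 2 * ((D1 - A + U1)\<^sup>2 + (D2 + A + U2)\<^sup>2)"
    unfolding n_def using r by (simp add: power_mult_distrib)
  also have "\<dots> = (x + y)\<^sup>2 + z\<^sup>2"
    unfolding x_def y_def z_def by (simp add: algebra_simps power2_eq_square)
  finally have rn_sq: "(r * n)\<^sup>2 = (x + y)\<^sup>2 + z\<^sup>2" .
  have "y\<^sup>2 \<le> (x + y)\<^sup>2" using x y by (simp add: power_mono)
  then have "y\<^sup>2 \<le> (r * n)\<^sup>2" unfolding rn_sq by (simp add: add_increasing2)
  moreover have "0 \<le> r * n" using r unfolding n_def by simp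
  ultimately have y_le: "y \<le> r * n" by (rule power2_le_imp_le)
  then have "r * s1 \<le> 0" using rn s0_le unfolding y_def by linarith
  then have s1_0: "s1 = 0" using r s1 by (simp add: mult_le_0_iff)
  then have "r * n = r * s0 + 2*A" using rn by simp
  then have s0_eq: "r * s0 = U2 - U1" and "r * n = y" using s0_le y_le unfolding y_def by linarith+
  then have "x * (x + 2*y) + z\<^sup>2 = 0" using rn_sq by (simp add: algebra_simps power2_eq_square)
  moreover have "0 \<le> x * (x + 2*y)" using x y by simp
  ultimately have "x * (x + 2*y) = 0" and "z = 0" by (simp_all add: add_nonneg_eq_0_iff)
  then have "x = 0" using x y by auto
  show ?thesis using \<open>x = 0\<close> \<open>z = 0\<close> s0_eq s1_0 unfolding x_def z_def r_def by simp
qed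

lemma lag_bound_forces_apex:
  fixes \<sigma> A A' B' U1 U2 dx dy s0 s1 :: real
  assumes \<sigma>: "\<sigma> = 1 \<or> \<sigma> = -1" and A: "0 < A" and A': "0 < A'" and B': "0 \<le> B'"
    and cone: "\<bar>dx\<bar> \<le> dy" and s0: "0 \<le> s0" and s1: "0 \<le> s1"
    and lag: "sqrt ((-\<sigma>*A)\<^sup>2 + A\<^sup>2) * s0 \<le> -\<sigma>*A*U1 + A*U2"
    and step: "s1 = s0 + sqrt ((-\<sigma>*A)\<^sup>2 + A\<^sup>2) - sqrt ((dx - \<sigma>*A + U1)\<^sup>2 + (dy + A + U2)\<^sup>2)"
    and prev: "(U1 = 0 \<and> U2 = 0)
      \<or> sqrt ((\<sigma>*(A' - B'))\<^sup>2 + (A' + B')\<^sup>2) * s0 \<le> \<sigma>*(A' - B')*U1 + (A' + B')*U2"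
  shows "dx = 0 \<and> dy = 0 \<and> s1 = 0"
proof -
  define u where "u = \<sigma> * U1"
  define d where "d = \<sigma> * dx"
  have \<sigma>\<sigma>: "\<sigma> * \<sigma> = 1" using \<sigma> by auto
  have sq: "(-\<sigma>*A)\<^sup>2 = A\<^sup>2" "(dx - \<sigma>*A + U1)\<^sup>2 = (d - A + u)\<^sup>2" "(\<sigma>*(A' - B'))\<^sup>2 = (A' - B')\<^sup>2"
    using \<sigma> unfolding u_def d_def by (auto simp: power2_eq_square algebra_simps)
  have cone': "\<bar>d\<bar> \<le> dy" using cone \<sigma> unfolding d_def by auto
  have lag': "sqrt (A\<^sup>2 + A\<^sup>2) * s0 \<le> -A*u + A*U2"
    using lag unfolding sq u_def by (simp add: algebra_simps)
  have step': "s1 = s0 + sqrt (A\<^sup>2 + A\<^sup>2) - sqrt ((d - A + u)\<^sup>2 + (dy + A + U2)\<^sup>2)"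
    using step unfolding sq .
  have tight: "d = dy" "d + dy + u + U2 = 0" "sqrt 2 * s0 = U2 - u" "s1 = 0"
    using tight_move[OF A cone' s0 s1 lag' step'] by blast+
  have "0 \<le> u + U2" using prev
  proof
    assume "U1 = 0 \<and> U2 = 0"
    then show ?thesis unfolding u_def by simp
  next
    assume bound: "sqrt ((\<sigma>*(A' - B'))\<^sup>2 + (A' + B')\<^sup>2) * s0 \<le> \<sigma>*(A' - B')*U1 + (A' + B')*U2"
    have "(sqrt 2 * B')\<^sup>2 \<le> (A' - B')\<^sup>2 + (A' + B')\<^sup>2"
      by (simp add: algebra_simps power2_eq_square)
    then have "sqrt 2 * B' \<le> sqrt ((A' - B')\<^sup>2 + (A' + B')\<^sup>2)" using B' by (simp add: real_le_rsqrt)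
    have "B' * (U2 - u) = sqrt 2 * B' * s0"
      using tight(3) by (simp add: mult.commute mult.left_commute)
    also have "\<dots> \<le> sqrt ((A' - B')\<^sup>2 + (A' + B')\<^sup>2) * s0"
      using \<open>sqrt 2 * B' \<le> _\<close> s0 by (rule mult_right_mono)
    also have "\<dots> \<le> (A' - B')*u + (A' + B')*U2"
      using bound unfolding sq u_def by (simp add: algebra_simps)
    finally have "0 \<le> A' * (u + U2)" by (simp add: algebra_simps)
    then show ?thesis using A' by (simp add: zero_le_mult_iff)
  qed
  then have "d = 0" and "dy = 0" using tight cone' by linarith+
  then show ?thesis using \<sigma> tight(4) unfolding d_def by auto
qed

section \<open>The alternating input and its apexes\<close>

lemma nat_cases_1_add_2:
  fixes j :: nat
  assumes "1 \<le> j"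
  obtains "j = 1" | n where "j = n + 2"
proof (cases "j = 1")
  case True
  then show thesis by (rule that(1))
next
  case False
  with assms have "j = (j - 2) + 2" by simp
  then show thesis by (rule that(2))
qed

text \<open>request s n is the x-coordinate of X_(n+1), so requests s i lists X_1, ..., X_i.\<close>

definition request :: "real \<Rightarrow> nat \<Rightarrow> real" where
  "request s n = 2 * (-s)^n"

definition requests :: "real \<Rightarrow> nat \<Rightarrow> real list" where
  "requests s i = map (request s) [0..<i]"

lemma length_requests [simp]: "length (requests s i) = i"
  by (simp add: requests_def)

lemma take_requests [simp]: "j \<le> i \<Longrightarrow> take j (requests s i) = requests s j"
  by (simp add: requests_def take_map)

lemma set_requests: "set (requests s i) = request s ` {..<i}"
  by (auto simp: requests_def)

locale apex_geometry =
  fixes \<alpha> s :: real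
  assumes alpha_pos: "0 < \<alpha>" and alpha_le: "\<alpha> \<le> pi / 4" and s_gt_1: "1 < s"
begin

definition \<tau> :: real where "\<tau> = tan \<alpha>"

lemma tau_pos: "0 < \<tau>"
  unfolding \<tau>_def using alpha_pos alpha_le by (intro tan_gt_zero) auto

lemma tau_le_1: "\<tau> \<le> 1"
proof -
  have "tan \<alpha> \<le> tan (pi / 4)" using alpha_pos alpha_le by (intro tan_mono_le) auto
  then show ?thesis unfolding \<tau>_def by (simp add: tan_45)
qed

lemma cot_mult_tau: "cot \<alpha> * \<tau> = 1"
proof -
  have "0 < sin \<alpha>" "0 < cos \<alpha>"
    using alpha_pos alpha_le by (auto intro!: sin_gt_zero cos_gt_zero)
  then show ?thesis unfolding \<tau>_def cot_def tan_def by simp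
qed

lemma cot_pos: "0 < cot \<alpha>"
  using cot_mult_tau tau_pos by (metis zero_less_mult_pos2 zero_less_one)

definition rise :: "nat \<Rightarrow> real" where
  "rise j = (if j = 0 then cot \<alpha> else if j = 1 then s * cot \<alpha> else s^(j - 2) * (s\<^sup>2 - 1) * cot \<alpha>)"

lemma rise_pos: "0 < rise j"
  using s_gt_1 cot_pos by (simp add: rise_def)

lemma T_add_2: "T \<alpha> s (n + 2) = ((-1)^n * s^n * (1 - s), s^n * (1 + s) * cot \<alpha>)"
  by (simp add: T_def power_minus[of s])

lemma T_Suc: "T \<alpha> s (Suc j) = (fst (T \<alpha> s j) + (-1)^j * \<tau> * rise j, snd (T \<alpha> s j) + rise j)"
proof -
  consider "j = 0" | "j = 1" | n where "j = n + 2"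
    by (metis One_nat_def add_2_eq_Suc' not0_implies_Suc)
  then show ?thesis
  proof cases
    case 1
    then show ?thesis using cot_mult_tau by (simp add: T_def rise_def mult.commute)
  next
    case 2
    then show ?thesis using cot_mult_tau by (simp add: T_def rise_def algebra_simps)
  next
    case (3 n)
    have y: "rise j = s^n * (s\<^sup>2 - 1) * cot \<alpha>" using 3 by (simp add: rise_def)
    have "(-1)^j * \<tau> * (s^n * (s\<^sup>2 - 1) * cot \<alpha>) = (-1)^n * s^n * (s\<^sup>2 - 1) * (cot \<alpha> * \<tau>)"
      using 3 by simp
    then have x: "(-1)^j * \<tau> * (s^n * (s\<^sup>2 - 1) * cot \<alpha>) = (-1)^n * s^n * (s\<^sup>2 - 1)"
      using cot_mult_tau by simp
    have Tj: "T \<alpha> s j = ((-1)^n * s^n * (1 - s), s^n * (1 + s) * cot \<alpha>)"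
      using 3 T_add_2 by simp
    have "T \<alpha> s (Suc j) = T \<alpha> s (Suc n + 2)" using 3 by simp
    also have "\<dots> = ((-1)^n * s^n * (1 - s) + (-1)^n * s^n * (s\<^sup>2 - 1),
        s^n * (1 + s) * cot \<alpha> + s^n * (s\<^sup>2 - 1) * cot \<alpha>)"
      unfolding T_add_2 by (simp add: algebra_simps power2_eq_square)
    finally show ?thesis by (simp only: Tj y x fst_conv snd_conv)
  qed
qed

lemma snd_T_nonneg: "0 \<le> snd (T \<alpha> s j)"
  using s_gt_1 cot_pos by (simp add: T_def)

lemma snd_T_mult_tau: "snd (T \<alpha> s (n + 2)) * \<tau> = s^n * (1 + s)"
  unfolding T_add_2 using cot_mult_tau by (simp add: mult.assoc)

lemma apex_interval_ends:
  "fst (T \<alpha> s (n + 2)) - snd (T \<alpha> s (n + 2)) * \<tau> \<in> {request s n, request s (Suc n)}"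
  "fst (T \<alpha> s (n + 2)) + snd (T \<alpha> s (n + 2)) * \<tau> \<in> {request s n, request s (Suc n)}"
proof -
  have fst_T: "fst (T \<alpha> s (n + 2)) = (-1)^n * s^n * (1 - s)" unfolding T_add_2 by simp
  have "request s n = (-1)^n * s^n * 2" and "request s (Suc n) = (-1)^n * s^n * (- 2 * s)"
    by (simp_all add: request_def power_minus[of s])
  moreover note neg_one_power_cases[of n]
  ultimately show
    "fst (T \<alpha> s (n + 2)) - snd (T \<alpha> s (n + 2)) * \<tau> \<in> {request s n, request s (Suc n)}"
    "fst (T \<alpha> s (n + 2)) + snd (T \<alpha> s (n + 2)) * \<tau> \<in> {request s n, request s (Suc n)}"
    unfolding fst_T snd_T_mult_tau by (auto simp: algebra_simps)
qed

lemma apex_interval_ends_requested: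
  assumes "1 \<le> j"
  shows "fst (T \<alpha> s j) - snd (T \<alpha> s j) * \<tau> \<in> set (0 # requests s j)"
    and "fst (T \<alpha> s j) + snd (T \<alpha> s j) * \<tau> \<in> set (0 # requests s j)"
proof -
  have "fst (T \<alpha> s j) - snd (T \<alpha> s j) * \<tau> \<in> set (0 # requests s j) \<and>
      fst (T \<alpha> s j) + snd (T \<alpha> s j) * \<tau> \<in> set (0 # requests s j)"
    using assms
  proof (cases rule: nat_cases_1_add_2)
    case 1
    then show ?thesis using cot_mult_tau by (simp add: T_def requests_def request_def)
  next
    case (2 n)
    have "{request s n, request s (Suc n)} \<subseteq> set (0 # requests s j)"
      using 2 by (auto simp: set_requests)
    then show ?thesis using apex_interval_ends[of n] 2 by blast
  qed
  then show "fst (T \<alpha> s j) - snd (T \<alpha> s j) * \<tau> \<in> set (0 # requests s j)"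
    and "fst (T \<alpha> s j) + snd (T \<alpha> s j) * \<tau> \<in> set (0 # requests s j)" by simp_all
qed

lemma FC_requests_apex_cone:
  assumes "1 \<le> j" and "P \<in> FC \<alpha> (0 # requests s j)"
  shows "\<bar>fst P - fst (T \<alpha> s j)\<bar> \<le> \<tau> * (snd P - snd (T \<alpha> s j))"
proof -
  have "covers \<alpha> P (fst (T \<alpha> s j) - snd (T \<alpha> s j) * \<tau>)"
    and "covers \<alpha> P (fst (T \<alpha> s j) + snd (T \<alpha> s j) * \<tau>)"
    using assms apex_interval_ends_requested[OF assms(1)] unfolding FC_def by auto
  then show ?thesis unfolding covers_def \<tau>_def[symmetric] by (auto simp: algebra_simps)
qed

lemma requests_covered_by_apex:
  assumes "1 \<le> i" and x: "x \<in> set (0 # requests s i)"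
  shows "\<bar>x - fst (T \<alpha> s i)\<bar> \<le> snd (T \<alpha> s i) * \<tau>"
  using assms(1)
proof (cases rule: nat_cases_1_add_2)
  case 1
  then show ?thesis using x cot_mult_tau by (auto simp: T_def requests_def request_def)
next
  case (2 n)
  have fst_T: "fst (T \<alpha> s i) = (-1)^n * s^n * (1 - s)" unfolding 2 T_add_2 by simp
  have abs_fst_T: "\<bar>fst (T \<alpha> s i)\<bar> = s^n * (s - 1)"
    using s_gt_1 unfolding fst_T by (simp add: abs_mult power_abs)
  have "x = 0 \<or> (\<exists>m \<le> n. x = request s m) \<or> x = request s (Suc n)"
    using x unfolding 2 by (fastforce simp: set_requests less_Suc_eq_le le_Suc_eq)
  moreover have "\<bar>request s m\<bar> \<le> 2 * s^n" if "m \<le> n" for m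
    using s_gt_1 that by (simp add: request_def abs_mult power_abs power_increasing)
  moreover have "0 \<le> 2 * s^n" using s_gt_1 by simp
  ultimately consider "\<bar>x\<bar> \<le> 2 * s^n" | "x = request s (Suc n)" by force
  then have "\<bar>x - fst (T \<alpha> s i)\<bar> \<le> s^n * (1 + s)"
  proof cases
    case 1
    moreover have "\<bar>x - fst (T \<alpha> s i)\<bar> \<le> \<bar>x\<bar> + \<bar>fst (T \<alpha> s i)\<bar>" by (rule abs_triangle_ineq4)
    moreover have "2 * s^n + s^n * (s - 1) = s^n * (1 + s)" by (simp add: algebra_simps)
    ultimately show ?thesis using abs_fst_T by linarith
  next
    case 2
    then have "x - fst (T \<alpha> s i) = - ((-1)^n * (s^n * (1 + s)))"
      unfolding fst_T request_def by (simp add: power_minus[of s] algebra_simps)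
    then show ?thesis using s_gt_1 by (simp add: abs_mult power_abs)
  qed
  then show ?thesis unfolding 2 snd_T_mult_tau .
qed

lemma T_in_FC:
  assumes "1 \<le> i" and "m \<le> i"
  shows "T \<alpha> s i \<in> FC \<alpha> (0 # requests s m)"
proof -
  have "set (0 # requests s m) \<subseteq> set (0 # requests s i)"
    using assms(2) by (auto simp: set_requests)
  then have "covers \<alpha> (T \<alpha> s i) x" if "x \<in> set (0 # requests s m)" for x
    using requests_covered_by_apex[OF assms(1), of x] that snd_T_nonneg[of i]
    unfolding covers_def \<tau>_def by (auto simp: abs_le_iff algebra_simps)
  then show ?thesis using snd_T_nonneg[of i] unfolding FC_def by blast
qed

definition offline_costs :: "nat \<Rightarrow> real set" where
  "offline_costs i = {(\<Sum>m<i. edist (P m) (P (Suc m))) | P.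
      P 0 = (0, 0) \<and> (\<forall>m \<le> i. P m \<in> FC \<alpha> (take (Suc m) (0 # requests s i)))}"

lemma OPT_requests: "OPT \<alpha> (requests s i) = Inf (offline_costs i)"
  unfolding OPT_def offline_costs_def by simp

lemma o_cost_in_offline_costs:
  assumes "1 \<le> i"
  shows "o_cost \<alpha> s i \<in> offline_costs i"
proof -
  obtain i' where i: "i = Suc i'" using assms by (cases i) auto
  define P where "P m = (if m = 0 then (0, 0) else T \<alpha> s i)" for m :: nat
  have "P m \<in> FC \<alpha> (take (Suc m) (0 # requests s i))" if "m \<le> i" for m
  proof (cases "m = 0")
    case True
    then show ?thesis unfolding P_def FC_def covers_def by simp
  next
    case False
    then show ?thesis using T_in_FC[OF assms that] that by (simp add: P_def)
  qed
  moreover have "(\<Sum>m<i. edist (P m) (P (Suc m))) = o_cost \<alpha> s i"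
    unfolding i sum.lessThan_Suc_shift P_def o_cost_def edist_def by simp
  ultimately show ?thesis unfolding offline_costs_def by (intro CollectI exI[of _ P]) (auto simp: P_def)
qed

lemma offline_costs_ge_cot:
  assumes "1 \<le> i" and "c \<in> offline_costs i"
  shows "cot \<alpha> \<le> c"
proof -
  obtain P where c: "c = (\<Sum>m<i. edist (P m) (P (Suc m)))" and P0: "P 0 = (0, 0)"
    and P: "\<forall>m \<le> i. P m \<in> FC \<alpha> (take (Suc m) (0 # requests s i))"
    using assms(2) unfolding offline_costs_def by blast
  obtain i' where i: "i = Suc i'" using assms(1) by (cases i) auto
  have "take 2 (0 # requests s i) = [0, 2]"
    using assms(1) take_requests[of 1 i] by (simp add: requests_def request_def)
  then have "P 1 \<in> FC \<alpha> [0, 2]" using P assms(1) by (metis numeral_2_eq_2 One_nat_def)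
  then have "1 \<le> snd (P 1) * \<tau>" unfolding FC_def covers_def \<tau>_def by simp
  then have "cot \<alpha> \<le> snd (P 1)"
    using cot_mult_tau tau_pos by (metis mult_le_cancel_right_pos)
  also have "snd (P 1) \<le> edist (P 0) (P 1)"
    unfolding edist_def P0 using real_sqrt_ge_abs2[of "0 - fst (P 1)" "0 - snd (P 1)"] by simp
  also have "edist (P 0) (P 1) \<le> c"
    unfolding c i sum.lessThan_Suc_shift
    by (simp add: edist_def sum_nonneg)
  finally show ?thesis .
qed

lemma OPT_requests_pos: "1 \<le> i \<Longrightarrow> 0 < OPT \<alpha> (requests s i)"
proof -
  assume i: "1 \<le> i"
  have "cot \<alpha> \<le> Inf (offline_costs i)"
    using o_cost_in_offline_costs[OF i] offline_costs_ge_cot[OF i] by (intro cInf_greatest) auto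
  then show ?thesis unfolding OPT_requests using cot_pos by linarith
qed

lemma OPT_requests_le_o_cost: "1 \<le> i \<Longrightarrow> OPT \<alpha> (requests s i) \<le> o_cost \<alpha> s i"
proof -
  assume i: "1 \<le> i"
  have "bdd_below (offline_costs i)" using offline_costs_ge_cot[OF i] by (auto simp: bdd_below_def)
  then show ?thesis unfolding OPT_requests by (rule cInf_lower[OF o_cost_in_offline_costs[OF i]])
qed

end

section \<open>An algorithm of competitive ratio at most \<rho>\<close>

locale competitive_online = apex_geometry +
  fixes \<rho> :: real and alg :: "real list \<Rightarrow> real \<times> real"
  assumes rho_pos: "0 < \<rho>" and online: "online_alg \<alpha> alg"
    and ratio_le: "comp_ratio \<alpha> alg \<le> ereal \<rho>"
begin

definition pos :: "nat \<Rightarrow> real \<times> real" where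
  "pos j = alg (0 # requests s j)"

definition cost :: "nat \<Rightarrow> real" where
  "cost j = (\<Sum>m<j. edist (pos m) (pos (Suc m)))"

definition slack :: "nat \<Rightarrow> real" where
  "slack j = \<rho> * o_cost \<alpha> s j - cost j"

lemma pos_0: "pos 0 = (0, 0)"
  using online unfolding online_alg_def pos_def by (simp add: requests_def)

lemma pos_in_apex_cone:
  "1 \<le> j \<Longrightarrow> \<bar>fst (pos j) - fst (T \<alpha> s j)\<bar> \<le> \<tau> * (snd (pos j) - snd (T \<alpha> s j))"
  using FC_requests_apex_cone online unfolding online_alg_def pos_def by blast

lemma slack_0: "slack 0 = 0"
  unfolding slack_def cost_def o_cost_def edist_def by (simp add: T_def)

lemma slack_Suc:
  "slack (Suc j) = slack j + \<rho> * (o_cost \<alpha> s (Suc j) - o_cost \<alpha> s j) - edist (pos j) (pos (Suc j))"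
  unfolding slack_def cost_def by (simp add: algebra_simps)

lemma alg_cost_requests: "alg_cost alg (requests s i) = cost i"
  unfolding alg_cost_def cost_def pos_def by (intro sum.cong) auto

lemma slack_nonneg: "0 \<le> slack j"
proof (cases "j = 0")
  case True
  then show ?thesis using slack_0 by simp
next
  case False
  then have j: "1 \<le> j" by simp
  have "ereal (alg_cost alg (requests s j) / OPT \<alpha> (requests s j)) \<le> comp_ratio \<alpha> alg"
    unfolding comp_ratio_def using OPT_requests_pos[OF j] by (intro SUP_upper) simp
  then have "ereal (cost j / OPT \<alpha> (requests s j)) \<le> ereal \<rho>"
    using ratio_le unfolding alg_cost_requests by (rule order_trans)
  then have "cost j / OPT \<alpha> (requests s j) \<le> \<rho>" by simp
  then have "cost j \<le> \<rho> * OPT \<alpha> (requests s j)"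
    using OPT_requests_pos[OF j] by (simp add: field_simps)
  also have "\<dots> \<le> \<rho> * o_cost \<alpha> s j"
    using OPT_requests_le_o_cost[OF j] rho_pos by simp
  finally show ?thesis unfolding slack_def by simp
qed

end

section \<open>The run of MaxHedge\<close>

lemma zeta_product_le_first:
  fixes x y s :: real
  assumes "0 \<le> x" "0 \<le> y" "1 < s" "x * s < 1" "y * (1 + s) < 1"
  shows "x * y * (s\<^sup>2 - 1) \<le> 1 - x"
proof -
  have "x * y * (s\<^sup>2 - 1) = (x * (s - 1)) * (y * (1 + s))"
    by (simp add: algebra_simps power2_eq_square)
  also have "\<dots> \<le> x * (s - 1)" using assms by (intro mult_left_le) auto
  finally show ?thesis using assms by (simp add: algebra_simps)
qed

lemma zeta_product_le_second:
  fixes w x y s :: real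
  assumes "0 \<le> w" "0 \<le> x" "0 \<le> y" "1 < s" "w * s < 1" "x * (1 + s) < 1" "y * (1 + s) < 1"
  shows "x * y * (s\<^sup>2 - 1) \<le> (1 - w) * (1 - x)"
proof -
  have "x * y * (s\<^sup>2 - 1) = (x * (s - 1)) * (y * (1 + s))"
    by (simp add: algebra_simps power2_eq_square)
  also have "\<dots> \<le> x * (s - 1)" using assms by (intro mult_left_le) auto
  finally have xy: "x * y * (s\<^sup>2 - 1) \<le> x * (s - 1)" .
  have "x \<le> x * (1 + s)" using assms by (simp add: algebra_simps)
  then have "x \<le> 1" using assms by linarith
  have "s * (x * (s - 1)) = (s - 1) * (s * x)" by (simp add: algebra_simps)
  also have "\<dots> \<le> (s - 1) * (1 - x)" using assms by (intro mult_left_mono) (auto simp: algebra_simps)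
  also have "\<dots> \<le> (s * (1 - w)) * (1 - x)"
    using assms \<open>x \<le> 1\<close> by (intro mult_right_mono) (auto simp: algebra_simps)
  finally have "x * (s - 1) \<le> (1 - w) * (1 - x)" using assms by (simp add: mult.assoc)
  with xy show ?thesis by linarith
qed

lemma zeta_product_le_later:
  fixes w x y s :: real
  assumes "0 \<le> w" "0 \<le> x" "0 \<le> y" "1 < s" "w * (1 + s) < 1" "x * (1 + s) < 1" "y * (1 + s) < 1"
  shows "x * y * s\<^sup>2 \<le> (1 - w) * (1 - x)"
proof -
  have "x \<le> x * (1 + s)" using assms by (simp add: algebra_simps)
  then have "x \<le> 1" using assms by linarith
  have "(1 + s) * (x * y * s\<^sup>2) = (x * s\<^sup>2) * (y * (1 + s))" by (simp add: algebra_simps)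
  also have "\<dots> \<le> x * s\<^sup>2" using assms by (intro mult_left_le) auto
  also have "\<dots> = s * (x * s)" by (simp add: power2_eq_square)
  also have "\<dots> \<le> s * (1 - x)" using assms by (intro mult_left_mono) (auto simp: algebra_simps)
  also have "\<dots> \<le> ((1 + s) * (1 - w)) * (1 - x)"
    using assms \<open>x \<le> 1\<close> by (intro mult_right_mono) (auto simp: algebra_simps)
  finally show ?thesis using assms by (simp add: mult.assoc)
qed

locale maxhedge_run = apex_geometry +
  fixes \<rho> :: real
  assumes valid: "mh_valid \<alpha> s \<rho>" and fails: "mh_fails \<alpha> s \<rho>"
begin

definition fail_round :: nat where
  "fail_round = (LEAST i. fails_in \<alpha> s \<rho> i)"

text \<open>zeta j is the parameter z_j of MaxHedge in the rounds 1 \<le> j < fail_round and 0 otherwise,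
  so that (Hx j, Hy j) is Z_j before the failing round and the apex T_j in it.\<close>

definition zeta :: "nat \<Rightarrow> real" where
  "zeta j = (if 1 \<le> j \<and> j < fail_round then SOME z. mh_ok \<alpha> s \<rho> j (Z \<alpha> s \<rho> (j - 1)) z else 0)"

definition rise_below :: "nat \<Rightarrow> real" where
  "rise_below j = zeta j * rise j"

definition rise_above :: "nat \<Rightarrow> real" where
  "rise_above j = (1 - zeta j) * rise j"

definition Hx :: "nat \<Rightarrow> real" where
  "Hx j = fst (T \<alpha> s j) + (-1)^j * \<tau> * rise_below j"

definition Hy :: "nat \<Rightarrow> real" where
  "Hy j = snd (T \<alpha> s j) + rise_below j"

definition Dx :: "nat \<Rightarrow> real" where
  "Dx j = Hx (Suc j) - Hx j"

definition Dy :: "nat \<Rightarrow> real" where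
  "Dy j = Hy (Suc j) - Hy j"

definition dlen :: "nat \<Rightarrow> real" where
  "dlen j = sqrt ((Dx j)\<^sup>2 + (Dy j)\<^sup>2)"

definition budget :: "nat \<Rightarrow> real" where
  "budget j = \<rho> * (o_cost \<alpha> s j - o_cost \<alpha> s (j - 1))"

lemma fail_round_fails: "fails_in \<alpha> s \<rho> fail_round"
  using fails unfolding mh_fails_def fail_round_def by (rule LeastI_ex)

lemma one_le_fail_round: "1 \<le> fail_round"
  using fail_round_fails unfolding fails_in_def by simp

lemma zeta_ok:
  assumes "1 \<le> j" and "j < fail_round"
  shows "mh_ok \<alpha> s \<rho> j (Z \<alpha> s \<rho> (j - 1)) (zeta j)"
proof -
  have "\<not> fails_in \<alpha> s \<rho> j" using assms(2) unfolding fail_round_def by (rule not_less_Least)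
  then have "\<exists>z. mh_ok \<alpha> s \<rho> j (Z \<alpha> s \<rho> (j - 1)) z" using assms(1) unfolding fails_in_def by simp
  then show ?thesis using assms unfolding zeta_def by (simp add: someI_ex)
qed

lemma zeta_0: "zeta 0 = 0"
  by (simp add: zeta_def)

lemma zeta_nonneg: "0 \<le> zeta j"
  using zeta_ok[of j] unfolding mh_ok_def by (cases "1 \<le> j \<and> j < fail_round") (auto simp: zeta_def)

lemma hl_pt_eq: "hl_pt \<alpha> s j z = (fst (T \<alpha> s j) + (-1)^j * \<tau> * (z * rise j), snd (T \<alpha> s j) + z * rise j)"
  unfolding hl_pt_def T_Suc by (simp add: algebra_simps)

lemma hl_pt_zeta: "hl_pt \<alpha> s j (zeta j) = (Hx j, Hy j)"
  unfolding hl_pt_eq Hx_def Hy_def rise_below_def ..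

lemma Z_eq_H: "j < fail_round \<Longrightarrow> Z \<alpha> s \<rho> j = (Hx j, Hy j)"
proof (cases j)
  case 0
  then show ?thesis by (simp add: Hx_def Hy_def rise_below_def zeta_0 T_def)
next
  case (Suc i)
  assume "j < fail_round"
  then have "Z \<alpha> s \<rho> j = hl_pt \<alpha> s j (zeta j)" unfolding Suc by (simp add: zeta_def)
  then show ?thesis unfolding hl_pt_zeta .
qed

lemma H_fail_round: "Hx fail_round = fst (T \<alpha> s fail_round)" "Hy fail_round = snd (T \<alpha> s fail_round)"
  unfolding Hx_def Hy_def rise_below_def zeta_def by simp_all

text \<open>The only use of the validity of the run; it yields zeta_1_bound and zeta_bound.\<close>

lemma sgn_Hx: "1 \<le> j \<Longrightarrow> j < fail_round \<Longrightarrow> sgn (Hx j) = sgn (fst (T \<alpha> s j))"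
  using valid Z_eq_H unfolding mh_valid_def in_domain_def fail_round_def
  by (metis fst_conv not_less_Least le_less_trans)

lemma zeta_1_bound: "zeta 1 * s < 1"
proof (cases "1 < fail_round")
  case True
  have "Hx 1 = 1 - zeta 1 * s * (cot \<alpha> * \<tau>)"
    unfolding Hx_def rise_below_def by (simp add: T_def rise_def algebra_simps)
  moreover have "sgn (Hx 1) = 1" using sgn_Hx[of 1] True by (simp add: T_def)
  ultimately show ?thesis using cot_mult_tau by (simp add: sgn_1_pos)
next
  case False
  then show ?thesis by (simp add: zeta_def)
qed

lemma zeta_bound:
  assumes "2 \<le> j"
  shows "zeta j * (1 + s) < 1"
proof (cases "j < fail_round")
  case True
  define n where "n = j - 2"
  have j: "j = n + 2" unfolding n_def using assms by simp
  define a where "a = (-1)^n * s^n * (1 - s)"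
  have fst_T: "fst (T \<alpha> s j) = a" unfolding j a_def T_add_2 by simp
  have "(-1)^j * \<tau> * rise_below j = - a * (1 + s) * zeta j * (cot \<alpha> * \<tau>)"
    unfolding j a_def rise_below_def rise_def by (simp add: algebra_simps power2_eq_square)
  then have rb: "(-1)^j * \<tau> * rise_below j = - a * (1 + s) * zeta j"
    using cot_mult_tau by simp
  have "Hx j = a * (1 - zeta j * (1 + s))"
    unfolding Hx_def fst_T rb by (simp add: algebra_simps)
  moreover have "sgn (Hx j) = sgn a" using sgn_Hx True assms fst_T by simp
  moreover have "a \<noteq> 0" unfolding a_def using s_gt_1 by simp
  ultimately have "sgn (1 - zeta j * (1 + s)) = 1" by (simp add: sgn_mult sgn_eq_0_iff)
  then show ?thesis by (simp add: sgn_1_pos)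
next
  case False
  then show ?thesis by (simp add: zeta_def)
qed

lemma zeta_mult_s_less_1: "zeta j * s < 1"
proof -
  consider "j = 0" | "j = 1" | "2 \<le> j" by linarith
  then show ?thesis
  proof cases
    case 1
    then show ?thesis by (simp add: zeta_def)
  next
    case 2
    then show ?thesis using zeta_1_bound by simp
  next
    case 3
    have "zeta j * s \<le> zeta j * (1 + s)" using zeta_nonneg[of j] by (simp add: algebra_simps)
    then show ?thesis using zeta_bound[OF 3] by linarith
  qed
qed

lemma zeta_less_1: "zeta j < 1"
proof -
  have "zeta j \<le> zeta j * s" using zeta_nonneg[of j] s_gt_1 by (simp add: mult_le_cancel_left1)
  then show ?thesis using zeta_mult_s_less_1[of j] by linarith
qed

lemma rise_below_nonneg: "0 \<le> rise_below j"
  unfolding rise_below_def using zeta_nonneg rise_pos by (simp add: less_imp_le)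

lemma rise_above_pos: "0 < rise_above j"
  unfolding rise_above_def using zeta_less_1 rise_pos by simp

lemma rise_below_fail_round: "rise_below fail_round = 0"
  unfolding rise_below_def zeta_def by simp

lemma Dx_eq: "Dx j = (-1)^(Suc j) * \<tau> * (rise_below (Suc j) - rise_above j)"
  unfolding Dx_def Hx_def T_Suc rise_above_def rise_below_def by (simp add: algebra_simps)

lemma Dy_eq: "Dy j = rise_above j + rise_below (Suc j)"
  unfolding Dy_def Hy_def T_Suc rise_above_def rise_below_def by (simp add: algebra_simps)

lemma budget_eq_dlen:
  assumes "1 \<le> j" and "j < fail_round"
  shows "budget j = dlen (j - 1)"
proof -
  have j: "Suc (j - 1) = j" using assms(1) by simp
  have "Z \<alpha> s \<rho> (j - 1) = (Hx (j - 1), Hy (j - 1))" using assms(2) by (intro Z_eq_H) simp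
  then have "edist (hl_pt \<alpha> s j (zeta j)) (Z \<alpha> s \<rho> (j - 1)) = dlen (j - 1)"
    unfolding hl_pt_zeta dlen_def Dx_def Dy_def edist_def j by simp
  then show ?thesis using zeta_ok[OF assms] unfolding mh_ok_def budget_def by simp
qed

lemma budget_fail_round_less: "budget fail_round < dlen (fail_round - 1)"
proof (rule ccontr)
  obtain i where k: "fail_round = Suc i" using one_le_fail_round by (cases fail_round) auto
  assume "\<not> ?thesis"
  then have le: "dlen i \<le> budget (Suc i)" unfolding k by simp
  define f where "f z = edist (hl_pt \<alpha> s (Suc i) z) (Hx i, Hy i)" for z
  have f0: "f 0 = dlen i"
    using H_fail_round unfolding k f_def hl_pt_eq edist_def dlen_def Dx_def Dy_def by simp
  define b where "b = \<bar>budget (Suc i)\<bar> / rise (Suc i)"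
  have b: "0 \<le> b" unfolding b_def using rise_pos[of "Suc i"] by simp
  have "snd (T \<alpha> s (Suc i)) - Hy i = rise_above i"
    using Dy_eq[of i] rise_below_fail_round H_fail_round unfolding k Dy_def by simp
  moreover have "b * rise (Suc i) = \<bar>budget (Suc i)\<bar>" unfolding b_def using rise_pos[of "Suc i"] by simp
  moreover have "snd (T \<alpha> s (Suc i)) + b * rise (Suc i) - Hy i \<le> f b"
    unfolding f_def hl_pt_eq edist_def by simp
  ultimately have "budget (Suc i) \<le> f b" using rise_above_pos[of i] by linarith
  moreover have "\<forall>z. 0 \<le> z \<and> z \<le> b \<longrightarrow> isCont f z"
    unfolding f_def hl_pt_eq edist_def by (intro allI impI continuous_intros)
  ultimately obtain z where "0 \<le> z" and "f z = budget (Suc i)"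
    using IVT[of f 0 "budget (Suc i)" b] f0 le b by auto
  then have "mh_ok \<alpha> s \<rho> (Suc i) (Z \<alpha> s \<rho> i) z"
    using Z_eq_H[of i] k unfolding mh_ok_def f_def budget_def by simp
  then show False using fail_round_fails unfolding fails_in_def k by auto
qed

lemma rise_below_product_le:
  assumes J: "1 \<le> J"
  shows "rise_below J * rise_below (Suc J) \<le> rise_above (J - 1) * rise_above J"
proof -
  obtain \<kappa> where \<kappa>: "rise (Suc J) = \<kappa> * rise (J - 1)"
    and zeta_prod: "zeta J * zeta (Suc J) * \<kappa> \<le> (1 - zeta (J - 1)) * (1 - zeta J)"
  proof -
    have "J = 1 \<or> J = 2 \<or> J = (J - 3) + 3" using J by arith
    then consider "J = 1" | "J = 2" | n where "J = n + 3" by blast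
    then show thesis
    proof cases
      case 1
      have "zeta J * zeta (Suc J) * (s\<^sup>2 - 1) \<le> 1 - zeta J"
        using 1 zeta_bound[of "Suc J"]
        by (intro zeta_product_le_first zeta_nonneg zeta_mult_s_less_1 s_gt_1) simp
      then have "zeta J * zeta (Suc J) * (s\<^sup>2 - 1) \<le> (1 - zeta (J - 1)) * (1 - zeta J)"
        using 1 zeta_0 by simp
      moreover have "rise (Suc J) = (s\<^sup>2 - 1) * rise (J - 1)" using 1 by (simp add: rise_def)
      ultimately show thesis using that by blast
    next
      case 2
      have "zeta J * zeta (Suc J) * (s\<^sup>2 - 1) \<le> (1 - zeta (J - 1)) * (1 - zeta J)"
        using 2 zeta_bound[of J] zeta_bound[of "Suc J"]
        by (intro zeta_product_le_second zeta_nonneg zeta_mult_s_less_1 s_gt_1) simp_all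
      moreover have "rise (Suc J) = (s\<^sup>2 - 1) * rise (J - 1)"
        using 2 by (simp add: rise_def algebra_simps)
      ultimately show thesis using that by blast
    next
      case (3 n)
      have "zeta J * zeta (Suc J) * s\<^sup>2 \<le> (1 - zeta (J - 1)) * (1 - zeta J)"
        using 3 zeta_bound[of "J - 1"] zeta_bound[of J] zeta_bound[of "Suc J"]
        by (intro zeta_product_le_later zeta_nonneg s_gt_1) simp_all
      moreover have "rise (Suc J) = s\<^sup>2 * rise (J - 1)"
        using 3 by (simp add: rise_def algebra_simps power2_eq_square)
      ultimately show thesis using that by blast
    qed
  qed
  have "rise_below J * rise_below (Suc J) = (zeta J * zeta (Suc J) * \<kappa>) * (rise (J - 1) * rise J)"
    unfolding rise_below_def \<kappa> by (simp add: algebra_simps)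
  also have "\<dots> \<le> ((1 - zeta (J - 1)) * (1 - zeta J)) * (rise (J - 1) * rise J)"
    using zeta_prod rise_pos by (intro mult_right_mono) (auto intro: less_imp_le)
  also have "\<dots> = rise_above (J - 1) * rise_above J"
    unfolding rise_above_def by (simp add: algebra_simps)
  finally show ?thesis .
qed

end

locale maxhedge_adversary =
  maxhedge_run \<alpha> s \<rho> + competitive_online \<alpha> s \<rho> alg for \<alpha> s \<rho> alg
begin

abbreviation Px :: "nat \<Rightarrow> real" where "Px j \<equiv> fst (pos j)"
abbreviation Py :: "nat \<Rightarrow> real" where "Py j \<equiv> snd (pos j)"

definition lag :: "nat \<Rightarrow> bool" where
  "lag j \<longleftrightarrow> dlen j * slack j \<le> Dx j * (Hx j - Px j) + Dy j * (Hy j - Py j)"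

text \<open>The lag bound one round later, still measured along the previous direction; the last
  term vanishes inside the domain of MaxHedge and is negative in its failing round.\<close>

definition lag_prev_dir :: "nat \<Rightarrow> bool" where
  "lag_prev_dir j \<longleftrightarrow> dlen (j - 1) * slack j
     \<le> Dx (j - 1) * (Hx j - Px j) + Dy (j - 1) * (Hy j - Py j) + dlen (j - 1) * (budget j - dlen (j - 1))"

lemma edist_pos_Suc:
  "edist (pos j) (pos (Suc j)) = sqrt ((Px (Suc j) - Px j)\<^sup>2 + (Py (Suc j) - Py j)\<^sup>2)"
  unfolding edist_def by (simp add: power2_commute)

lemma hedge_0_eq_pos_0: "Hx 0 = Px 0" "Hy 0 = Py 0"
  using pos_0 by (simp_all add: Hx_def Hy_def rise_below_def zeta_0 T_def)

lemma lag_0: "lag 0"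
  unfolding lag_def hedge_0_eq_pos_0 slack_0 by simp

lemma lag_prev_dir_Suc:
  assumes "lag j"
  shows "lag_prev_dir (Suc j)"
proof -
  define V1 where "V1 = Px (Suc j) - Px j"
  define V2 where "V2 = Py (Suc j) - Py j"
  have slack: "slack (Suc j) = slack j + budget (Suc j) - sqrt (V1\<^sup>2 + V2\<^sup>2)"
    using slack_Suc[of j] unfolding edist_pos_Suc by (simp add: V1_def V2_def budget_def)
  have move: "Dx j * V1 + Dy j * V2 \<le> dlen j * sqrt (V1\<^sup>2 + V2\<^sup>2)"
    unfolding dlen_def by (rule inner_le_sqrt_sum_squares)
  have dlen_sq: "(dlen j)\<^sup>2 = (Dx j)\<^sup>2 + (Dy j)\<^sup>2" unfolding dlen_def by simp
  have "dlen j * slack (Suc j) = dlen j * slack j + dlen j * budget (Suc j) - dlen j * sqrt (V1\<^sup>2 + V2\<^sup>2)"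
    unfolding slack by (simp add: algebra_simps)
  also have "\<dots> \<le> Dx j * (Hx j - Px j) + Dy j * (Hy j - Py j) + dlen j * budget (Suc j)
      - (Dx j * V1 + Dy j * V2)"
    using assms move unfolding lag_def by linarith
  also have "\<dots> = Dx j * (Hx (Suc j) - Px (Suc j)) + Dy j * (Hy (Suc j) - Py (Suc j))
      + dlen j * (budget (Suc j) - dlen j)"
    using dlen_sq unfolding V1_def V2_def Dx_def Dy_def by (simp add: algebra_simps power2_eq_square)
  finally show ?thesis unfolding lag_prev_dir_def by simp
qed

lemma lag_prev_dir_in_domain:
  assumes "1 \<le> j" and "j < fail_round" and "lag_prev_dir j"
  shows "dlen (j - 1) * slack j \<le> Dx (j - 1) * (Hx j - Px j) + Dy (j - 1) * (Hy j - Py j)"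
  using assms budget_eq_dlen unfolding lag_prev_dir_def by simp

lemma lag_Suc_regular:
  assumes J: "Suc j < fail_round" and prev: "lag_prev_dir (Suc j)"
    and nondeg: "\<tau> < 1 \<or> 0 < zeta (Suc j)"
  shows "lag (Suc j)"
proof -
  define \<sigma> :: real where "\<sigma> = (-1)^(Suc j)"
  define A B C D where "A = rise_above j" and "B = rise_below (Suc j)"
    and "C = rise_above (Suc j)" and "D = rise_below (Suc (Suc j))"
  define dx dy where "dx = Px (Suc j) - fst (T \<alpha> s (Suc j))" and "dy = Py (Suc j) - snd (T \<alpha> s (Suc j))"
  have A: "0 < A" and B: "0 \<le> B" and C: "0 < C" and D: "0 \<le> D"
    unfolding A_def B_def C_def D_def by (simp_all add: rise_above_pos rise_below_nonneg)
  have Dj: "Dx j = \<sigma>*\<tau>*(B - A)" "Dy j = A + B"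
    unfolding Dx_eq Dy_eq \<sigma>_def A_def B_def by simp_all
  have DSj: "Dx (Suc j) = \<sigma>*\<tau>*(C - D)" "Dy (Suc j) = C + D"
    unfolding Dx_eq Dy_eq \<sigma>_def C_def D_def by (simp_all add: algebra_simps)
  have H: "Hx (Suc j) - Px (Suc j) = \<sigma>*\<tau>*B - dx" "Hy (Suc j) - Py (Suc j) = B - dy"
    unfolding Hx_def Hy_def \<sigma>_def B_def dx_def dy_def by (simp_all add: algebra_simps)
  have cone: "\<bar>dx\<bar> \<le> \<tau> * dy" unfolding dx_def dy_def using pos_in_apex_cone[of "Suc j"] by simp
  have lag_old: "sqrt ((\<sigma>*\<tau>*(B - A))\<^sup>2 + (A + B)\<^sup>2) * slack (Suc j)
      \<le> \<sigma>*\<tau>*(B - A) * (\<sigma>*\<tau>*B - dx) + (A + B) * (B - dy)"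
    using lag_prev_dir_in_domain[OF _ J prev] unfolding dlen_def by (simp add: Dj H)
  have "0 < A*(1 - \<tau>\<^sup>2) + B*(1 + \<tau>\<^sup>2)"
    using nondeg
  proof
    assume "\<tau> < 1"
    then have "\<tau>\<^sup>2 < 1" using tau_pos by (simp add: abs_square_less_1)
    then show ?thesis using A B by (intro add_pos_nonneg mult_pos_pos mult_nonneg_nonneg) auto
  next
    assume "0 < zeta (Suc j)"
    then have "0 < B * (1 + \<tau>\<^sup>2)"
      unfolding B_def rise_below_def using rise_pos by (simp add: add_pos_nonneg)
    moreover have "\<tau>\<^sup>2 \<le> 1" using tau_pos tau_le_1 by (simp add: power_le_one)
    then have "0 \<le> A * (1 - \<tau>\<^sup>2)" using A by simp
    ultimately show ?thesis by linarith
  qed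
  moreover have "B * D \<le> A * C"
    using rise_below_product_le[of "Suc j"] unfolding A_def B_def C_def D_def by simp
  ultimately have "sqrt ((\<sigma>*\<tau>*(C - D))\<^sup>2 + (C + D)\<^sup>2) * slack (Suc j)
      \<le> \<sigma>*\<tau>*(C - D) * (\<sigma>*\<tau>*B - dx) + (C + D) * (B - dy)"
    using lag_bound_turn[OF neg_one_power_cases tau_pos tau_le_1 A B C D _ _ cone slack_nonneg]
      lag_old unfolding \<sigma>_def by blast
  then show ?thesis unfolding lag_def dlen_def DSj H .
qed

text \<open>For \<alpha> = pi/4 and Z_(j+1) = T_(j+1) the turn bound degenerates. Then the previous
  bounds leave the algorithm no choice but to sit at the apex with zero slack.\<close>

lemma lag_Suc_degenerate:
  assumes J: "Suc j < fail_round" and cur: "lag j" and prev: "j = 0 \<or> lag_prev_dir j"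
    and tau: "\<tau> = 1" and zeta: "zeta (Suc j) = 0"
  shows "lag (Suc j)"
proof -
  define \<sigma> :: real where "\<sigma> = (-1)^(Suc j)"
  define A A' B' where "A = rise_above j" and "A' = rise_above (j - 1)" and "B' = rise_below j"
  define U1 U2 where "U1 = Hx j - Px j" and "U2 = Hy j - Py j"
  define dx dy where "dx = Px (Suc j) - fst (T \<alpha> s (Suc j))" and "dy = Py (Suc j) - snd (T \<alpha> s (Suc j))"
  have A: "0 < A" and A': "0 < A'" and B': "0 \<le> B'"
    unfolding A_def A'_def B'_def by (simp_all add: rise_above_pos rise_below_nonneg)
  have below: "rise_below (Suc j) = 0" unfolding rise_below_def zeta by simp
  have Dj: "Dx j = -\<sigma>*A" "Dy j = A" unfolding Dx_eq Dy_eq \<sigma>_def A_def below tau by simp_all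
  have H: "Hx (Suc j) = fst (T \<alpha> s (Suc j))" "Hy (Suc j) = snd (T \<alpha> s (Suc j))"
    unfolding Hx_def Hy_def below by simp_all
  have cone: "\<bar>dx\<bar> \<le> dy" unfolding dx_def dy_def using pos_in_apex_cone[of "Suc j"] tau by simp
  have lag_j: "sqrt ((-\<sigma>*A)\<^sup>2 + A\<^sup>2) * slack j \<le> -\<sigma>*A*U1 + A*U2"
    using cur unfolding lag_def dlen_def Dj U1_def U2_def by simp
  have "Px (Suc j) - Px j = dx - \<sigma>*A + U1" and "Py (Suc j) - Py j = dy + A + U2"
    using Dj H unfolding Dx_def Dy_def dx_def dy_def U1_def U2_def by simp_all
  then have "edist (pos j) (pos (Suc j)) = sqrt ((dx - \<sigma>*A + U1)\<^sup>2 + (dy + A + U2)\<^sup>2)"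
    unfolding edist_pos_Suc by simp
  moreover have "\<rho> * (o_cost \<alpha> s (Suc j) - o_cost \<alpha> s j) = sqrt ((-\<sigma>*A)\<^sup>2 + A\<^sup>2)"
    using budget_eq_dlen[of "Suc j"] J unfolding budget_def dlen_def by (simp add: Dj)
  ultimately have step: "slack (Suc j) = slack j + sqrt ((-\<sigma>*A)\<^sup>2 + A\<^sup>2)
      - sqrt ((dx - \<sigma>*A + U1)\<^sup>2 + (dy + A + U2)\<^sup>2)"
    using slack_Suc[of j] by simp
  have "(U1 = 0 \<and> U2 = 0)
      \<or> sqrt ((\<sigma>*(A' - B'))\<^sup>2 + (A' + B')\<^sup>2) * slack j \<le> \<sigma>*(A' - B')*U1 + (A' + B')*U2"
  proof (cases "j = 0")
    case False
    then have j: "Suc (j - 1) = j" by simp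
    have "Dx (j - 1) = \<sigma>*(A' - B')" "Dy (j - 1) = A' + B'"
      unfolding Dx_eq Dy_eq j \<sigma>_def A'_def B'_def tau by (simp_all add: algebra_simps)
    then show ?thesis
      using lag_prev_dir_in_domain[of j] False J prev unfolding dlen_def U1_def U2_def by simp
  qed (simp add: hedge_0_eq_pos_0 U1_def U2_def)
  then have "dx = 0 \<and> dy = 0 \<and> slack (Suc j) = 0"
    using lag_bound_forces_apex[OF neg_one_power_cases A A' B' cone slack_nonneg slack_nonneg]
      lag_j step unfolding \<sigma>_def by blast
  then show ?thesis unfolding lag_def H dx_def dy_def by simp
qed

lemma lag_before_fail_round: "j < fail_round \<Longrightarrow> lag j \<and> (j = 0 \<or> lag_prev_dir j)"
proof (induction j)
  case 0
  then show ?case using lag_0 by simp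
next
  case (Suc j)
  then have "lag j" and prev: "j = 0 \<or> lag_prev_dir j" by simp_all
  from \<open>lag j\<close> have "lag_prev_dir (Suc j)" by (rule lag_prev_dir_Suc)
  have "lag (Suc j)"
  proof (cases "\<tau> < 1 \<or> 0 < zeta (Suc j)")
    case True
    then show ?thesis using lag_Suc_regular Suc.prems \<open>lag_prev_dir (Suc j)\<close> by blast
  next
    case False
    then have "\<tau> = 1" and "zeta (Suc j) = 0" using tau_le_1 zeta_nonneg[of "Suc j"] by simp_all
    then show ?thesis using lag_Suc_degenerate Suc.prems \<open>lag j\<close> prev by blast
  qed
  then show ?case using \<open>lag_prev_dir (Suc j)\<close> by simp
qed

lemma last_move_into_apex_cone:
  assumes k: "fail_round = Suc i"
  shows "Dx i * (Hx (Suc i) - Px (Suc i)) + Dy i * (Hy (Suc i) - Py (Suc i)) \<le> 0"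
proof -
  define A where "A = rise_above i"
  define dx dy where "dx = Px (Suc i) - fst (T \<alpha> s (Suc i))" and "dy = Py (Suc i) - snd (T \<alpha> s (Suc i))"
  have A: "0 < A" unfolding A_def by (rule rise_above_pos)
  have cone: "\<bar>dx\<bar> \<le> \<tau> * dy" unfolding dx_def dy_def using pos_in_apex_cone[of "Suc i"] by simp
  then have "0 \<le> \<tau> * dy" by (rule order_trans[OF abs_ge_zero])
  then have dy: "0 \<le> dy" using tau_pos by (simp add: zero_le_mult_iff)
  have "\<bar>(-1)^i * \<tau> * dx\<bar> = \<tau> * \<bar>dx\<bar>" using tau_pos by (simp add: abs_mult power_abs)
  also have "\<dots> \<le> \<tau> * (\<tau> * dy)" using cone tau_pos by (simp add: mult_left_mono)
  also have "\<dots> \<le> 1 * dy"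
    unfolding mult.assoc[symmetric] using tau_pos tau_le_1 dy by (intro mult_right_mono mult_le_one) auto
  finally have "0 \<le> (-1)^i * \<tau> * dx + dy" by (simp add: abs_le_iff)
  moreover have "Dx i * (Hx (Suc i) - Px (Suc i)) + Dy i * (Hy (Suc i) - Py (Suc i))
      = - A * ((-1)^i * \<tau> * dx + dy)"
    using H_fail_round rise_below_fail_round unfolding k Dx_eq Dy_eq A_def dx_def dy_def
    by (simp add: algebra_simps)
  ultimately show ?thesis using A by simp
qed

lemma not_competitive: False
proof -
  obtain i where k: "fail_round = Suc i" using one_le_fail_round by (cases fail_round) auto
  then have "lag_prev_dir (Suc i)" using lag_before_fail_round[of i] lag_prev_dir_Suc by simp
  have "\<bar>Dy i\<bar> \<le> dlen i" unfolding dlen_def by (rule real_sqrt_ge_abs2)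
  then have dlen: "0 < dlen i"
    using rise_above_pos[of i] rise_below_fail_round unfolding k Dy_eq by simp
  moreover have "budget (Suc i) < dlen i" using budget_fail_round_less unfolding k by simp
  ultimately have "dlen i * (budget (Suc i) - dlen i) < 0" by (simp add: mult_pos_neg)
  then have "dlen i * slack (Suc i) < 0"
    using \<open>lag_prev_dir (Suc i)\<close> last_move_into_apex_cone[OF k] unfolding lag_prev_dir_def by simp
  moreover have "0 \<le> dlen i * slack (Suc i)" using slack_nonneg dlen by simp
  ultimately show False by simp
qed

end

theorem lemma14:
  fixes \<alpha> s \<rho> :: real
  assumes "0 < \<alpha>" and "\<alpha> \<le> pi / 4" and "s > 1" and "\<rho> > 0"
    and "mh_valid \<alpha> s \<rho>"
    and "mh_fails \<alpha> s \<rho>"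
  shows "\<forall>A. online_alg \<alpha> A \<longrightarrow> comp_ratio \<alpha> A > ereal \<rho>"
proof (intro allI impI)
  fix A
  assume online: "online_alg \<alpha> A"
  show "comp_ratio \<alpha> A > ereal \<rho>"
  proof (rule ccontr)
    assume "\<not> comp_ratio \<alpha> A > ereal \<rho>"
    then have "comp_ratio \<alpha> A \<le> ereal \<rho>" by simp
    then interpret maxhedge_adversary \<alpha> s \<rho> A
      using assms online by unfold_locales auto
    show False by (rule not_competitive)
  qed
qed

end
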